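(* In every non abelian dihedral group (i.e. every $\mathbb{D}_{2n}$ with $n\in\{3,4,\dots\}\cup\{\infty\}$) the following sentences are true: \begin{itemize} \item[$(P_1)$] $\forall x \forall y\, \big( (x^2 \neq 1 \wedge y^2 \neq 1)\Rightarrow xy=yx\big)$; \item[$(P_2)$] $\forall x \forall y \forall z\, \big((x \neq 1 \wedge x^2 = 1 \wedge y^2 \neq 1 \wedge xz \neq zx )\Rightarrow x^{-1}yx=y^{-1}\big)$; \item[$(P_3)$] $\forall x \forall y \forall z \forall t \forall u\, \big((xz \neq zx \wedge yt \neq ty \wedge x^2=1 \wedge y^2=1 \wedge (xy)^2=1)\Rightarrow (xy)u=u(xy)\big)$; \item[$(P_4)$] $\forall x \forall y \forall z \forall t\, \big((x \neq 1 \wedge x^2 = 1 \wedge y \neq 1 \wedge y^2 =1 \wedge z^2 \neq 1 \wedge t^2 \neq 1 \wedge xz=zx \wedge yt=ty) \Rightarrow x=y\big)$. \end{itemize}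
   Context: For $n\in\{1,2,\dots\}\cup\{\infty\}$, $\mathbb{D}_{2n}=\langle a,b \mid a^2=b^n=1,\ a^{-1}ba=b^{-1}\rangle$ (the relation $b^n=1$ omitted when $n=\infty$); a group is dihedral if it is isomorphic to some $\mathbb{D}_{2n}$, and it is non abelian exactly when $n\ge 3$ or $n=\infty$. *)

theory Defs
  imports "HOL-Algebra.Algebra" "HOL-Library.Extended_Nat"
begin

text \<open>The pair (s, k) stands for the element b^k a^s, where s = True means
  that the factor a is present.\<close>

definition dih_red :: "enat \<Rightarrow> int \<Rightarrow> int" where
  "dih_red n k = (case n of enat m \<Rightarrow> k mod int m | \<infinity> \<Rightarrow> k)"

definition dih_carrier :: "enat \<Rightarrow> (bool \<times> int) set" where
  "dih_carrier n = {p. (case n of enat m \<Rightarrow> 0 \<le> snd p \<and> snd p < int m | \<infinity> \<Rightarrow> True)}"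

definition dih_mult :: "enat \<Rightarrow> bool \<times> int \<Rightarrow> bool \<times> int \<Rightarrow> bool \<times> int" where
  "dih_mult n p q = (fst p \<noteq> fst q, dih_red n (snd p + (if fst p then - snd q else snd q)))"

definition dihedral_group :: "enat \<Rightarrow> (bool \<times> int) monoid" where
  "dihedral_group n = \<lparr> carrier = dih_carrier n, monoid.mult = dih_mult n, monoid.one = (False, 0) \<rparr>"

end

theory Submission
  imports Defs
begin

text \<open>In the model, elements (False, k) are rotations and (True, k) reflections. Every
  reflection is an involution, so an element whose square is not 1 is a rotation, and rotations
  commute. A rotation is central exactly when it is an involution (then k and -k agree), so a
  non-central involution is a reflection, and a reflection commutes only with involutions. Hence a
  non-trivial involution commuting with a non-involution is a rotation of order 2, and there is
  at most one of those. All four sentences are first-order, so they transfer along the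
  isomorphism.\<close>

lemma dih_red_infinity [simp]: "dih_red \<infinity> k = k"
  by (simp add: dih_red_def)

lemma dih_red_enat [simp]: "dih_red (enat m) k = k mod int m"
  by (simp add: dih_red_def)

lemma dih_red_zero [simp]: "dih_red n 0 = 0"
  by (cases n) simp_all

lemma dih_mult_reflection_self [simp]: "dih_mult n (True, k) (True, k) = (False, 0)"
  by (cases n) (auto simp: dih_mult_def)

lemma dih_square_ne_one_imp_rotation: "dih_mult n p p \<noteq> (False, 0) \<Longrightarrow> \<not> fst p"
  by (cases p) auto

lemma dih_idempotent_eq_one:
  assumes "p \<in> dih_carrier n" and "dih_mult n p p = p"
  shows "p = (False, 0)"
proof -
  obtain k where p: "p = (False, k)"
    using assms(2) by (cases p) (simp add: dih_mult_def)
  show ?thesis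
  proof (cases n)
    case (enat m)
    then have "0 \<le> k" "k < int m" "(k + k) mod int m = k"
      using assms p by (auto simp: dih_carrier_def dih_mult_def)
    then have "int m dvd k"
      by (metis add_diff_cancel_right' mod_eq_dvd_iff mod_pos_pos_trivial)
    then have "k = 0"
      using \<open>0 \<le> k\<close> \<open>k < int m\<close> dvd_imp_le_int by force
    then show ?thesis using p by simp
  next
    case infinity
    then show ?thesis using assms(2) p by (simp add: dih_mult_def)
  qed
qed

lemma dih_involutive_rotation_central:
  assumes "dih_mult n (False, k) (False, k) = (False, 0)"
  shows "dih_mult n (False, k) c = dih_mult n c (False, k)"
proof (cases n)
  case (enat m)
  obtain s l where c: "c = (s, l)" by force
  from assms enat have "int m dvd k + k" by (simp add: dih_mult_def mod_eq_0_iff_dvd)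
  then have "(k + l) mod int m = (l - k) mod int m"
    by (simp add: mod_eq_dvd_iff)
  then show ?thesis using enat c by (auto simp: dih_mult_def add.commute)
next
  case infinity
  then show ?thesis using assms by (cases c) (auto simp: dih_mult_def)
qed

lemma dih_noncentral_involution_is_reflection:
  assumes "dih_mult n a a = (False, 0)" and "dih_mult n a c \<noteq> dih_mult n c a"
  shows "fst a"
proof (rule ccontr)
  assume "\<not> fst a"
  then have "a = (False, snd a)" by (cases a) simp
  then show False using assms dih_involutive_rotation_central by metis
qed

lemma dih_commute_reflection_imp_involution:
  assumes "dih_mult n (True, k) c = dih_mult n c (True, k)"
  shows "dih_mult n c c = (False, 0)"
proof (cases c)
  case (Pair s l)
  show ?thesis
  proof (cases s)
    case True
    then show ?thesis using Pair by simp
  next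
    case False
    with Pair have c: "c = (False, l)" by simp
    show ?thesis
    proof (cases n)
      case (enat m)
      from assms enat c have "(k - l) mod int m = (l + k) mod int m"
        by (simp add: dih_mult_def)
      then have "int m dvd l + l"
        by (simp add: mod_eq_dvd_iff)
      then show ?thesis using enat c by (simp add: dih_mult_def mod_eq_0_iff_dvd)
    next
      case infinity
      then show ?thesis using assms c by (auto simp: dih_mult_def)
    qed
  qed
qed

lemma dih_involution_commuting_with_non_involution:
  assumes "a \<in> dih_carrier n" "a \<noteq> (False, 0)" "dih_mult n a a = (False, 0)"
    and "dih_mult n a c = dih_mult n c a" "dih_mult n c c \<noteq> (False, 0)"
  obtains m where "n = enat m" "a = (False, int m div 2)"
proof -
  have "\<not> fst a"
  proof
    assume "fst a"
    then have "a = (True, snd a)" by (cases a) simp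
    then show False using assms(4,5) dih_commute_reflection_imp_involution by metis
  qed
  then obtain k where a: "a = (False, k)" by (cases a) auto
  obtain m where m: "n = enat m"
    using assms(2,3) a by (cases n) (auto simp: dih_mult_def)
  have "0 < k" "k < int m" "int m dvd k + k"
    using assms(1-3) a m by (auto simp: dih_carrier_def dih_mult_def mod_eq_0_iff_dvd)
  from \<open>int m dvd k + k\<close> obtain q where q: "k + k = int m * q" ..
  then have "0 < int m * q" "int m * q < int m * 2"
    using \<open>0 < k\<close> \<open>k < int m\<close> by linarith+
  then have "q = 1"
    by (simp add: zero_less_mult_iff)
  with q have "k + k = int m" by simp
  then show thesis using that m a by fastforce
qed

lemma dih_non_involutions_commute:
  "dih_mult n a a \<noteq> (False, 0) \<Longrightarrow> dih_mult n b b \<noteq> (False, 0)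
    \<Longrightarrow> dih_mult n a b = dih_mult n b a"
  using dih_square_ne_one_imp_rotation[of n a] dih_square_ne_one_imp_rotation[of n b]
  by (cases a; cases b) (auto simp: dih_mult_def add.commute)

lemma dih_noncentral_involution_mult_non_involution:
  assumes "dih_mult n a a = (False, 0)" "dih_mult n a c \<noteq> dih_mult n c a"
    and "dih_mult n b b \<noteq> (False, 0)"
  shows "dih_mult n (dih_mult n a b) (dih_mult n a b) = (False, 0)"
  using dih_noncentral_involution_is_reflection[OF assms(1,2)]
    dih_square_ne_one_imp_rotation[OF assms(3)]
  by (cases a; cases b) (auto simp: dih_mult_def)

lemma dih_involutive_product_of_noncentral_involutions_central:
  assumes "dih_mult n a a = (False, 0)" "dih_mult n a c \<noteq> dih_mult n c a"
    and "dih_mult n b b = (False, 0)" "dih_mult n b d \<noteq> dih_mult n d b"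
    and "dih_mult n (dih_mult n a b) (dih_mult n a b) = (False, 0)"
  shows "dih_mult n (dih_mult n a b) e = dih_mult n e (dih_mult n a b)"
  using dih_noncentral_involution_is_reflection[OF assms(1,2)]
    dih_noncentral_involution_is_reflection[OF assms(3,4)]
    dih_involutive_rotation_central[of n "snd (dih_mult n a b)" e] assms(5)
  by (cases a; cases b) (auto simp: dih_mult_def)

lemma dih_involutions_commuting_with_non_involutions_eq:
  assumes "a \<in> dih_carrier n" "a \<noteq> (False, 0)" "dih_mult n a a = (False, 0)"
    and "dih_mult n a c = dih_mult n c a" "dih_mult n c c \<noteq> (False, 0)"
    and "b \<in> dih_carrier n" "b \<noteq> (False, 0)" "dih_mult n b b = (False, 0)"
    and "dih_mult n b d = dih_mult n d b" "dih_mult n d d \<noteq> (False, 0)"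
  shows "a = b"
  using dih_involution_commuting_with_non_involution[OF assms(1-5)]
    dih_involution_commuting_with_non_involution[OF assms(6-10)]
  by (metis enat.inject)

locale dihedral_copy = group G for G (structure) +
  fixes n :: enat and h
  assumes h_iso: "h \<in> iso G (dihedral_group n)"
begin

lemma h_carrier: "x \<in> carrier G \<Longrightarrow> h x \<in> dih_carrier n"
  using h_iso by (auto simp: iso_def hom_def dihedral_group_def)

lemma h_mult: "x \<in> carrier G \<Longrightarrow> y \<in> carrier G \<Longrightarrow> h (x \<otimes> y) = dih_mult n (h x) (h y)"
  using h_iso by (auto simp: iso_def hom_def dihedral_group_def)

lemma h_eq_iff: "x \<in> carrier G \<Longrightarrow> y \<in> carrier G \<Longrightarrow> h x = h y \<longleftrightarrow> x = y"
  using h_iso by (auto simp: iso_def bij_betw_def inj_on_def)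

lemma h_one: "h \<one> = (False, 0)"
  using dih_idempotent_eq_one[OF h_carrier[OF one_closed]] h_mult[OF one_closed one_closed]
  by simp

lemma eq_one_iff: "x \<in> carrier G \<Longrightarrow> x = \<one> \<longleftrightarrow> h x = (False, 0)"
  using h_eq_iff h_one by (metis one_closed)

lemma square_eq_one_iff:
  "x \<in> carrier G \<Longrightarrow> x [^] (2::nat) = \<one> \<longleftrightarrow> dih_mult n (h x) (h x) = (False, 0)"
  using eq_one_iff h_mult by (simp add: numeral_2_eq_2)

lemma commute_iff:
  "x \<in> carrier G \<Longrightarrow> y \<in> carrier G \<Longrightarrow> x \<otimes> y = y \<otimes> x \<longleftrightarrow> dih_mult n (h x) (h y) = dih_mult n (h y) (h x)"
  using h_eq_iff h_mult by (metis m_closed)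

lemma non_involutions_commute:
  "x \<in> carrier G \<Longrightarrow> y \<in> carrier G \<Longrightarrow> x [^] (2::nat) \<noteq> \<one> \<Longrightarrow> y [^] (2::nat) \<noteq> \<one>
    \<Longrightarrow> x \<otimes> y = y \<otimes> x"
  using dih_non_involutions_commute square_eq_one_iff commute_iff by metis

lemma noncentral_involution_inverts_non_involution:
  assumes "x \<in> carrier G" "y \<in> carrier G" "z \<in> carrier G"
    and "x [^] (2::nat) = \<one>" "y [^] (2::nat) \<noteq> \<one>" "x \<otimes> z \<noteq> z \<otimes> x"
  shows "inv x \<otimes> y \<otimes> x = inv y"
proof -
  have "(x \<otimes> y) [^] (2::nat) = \<one>"
    using dih_noncentral_involution_mult_non_involution assms square_eq_one_iff commute_iff h_mult
    by simp
  then have "x \<otimes> y \<otimes> x \<otimes> y = \<one>"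
    using assms(1,2) by (simp add: numeral_2_eq_2 m_assoc)
  moreover have "inv x = x"
    using assms(1,4) by (simp add: numeral_2_eq_2 inv_equality)
  ultimately show ?thesis
    using assms(1,2) by (simp add: inv_equality)
qed

lemma involutive_product_of_noncentral_involutions_central:
  assumes "x \<in> carrier G" "y \<in> carrier G" "z \<in> carrier G" "t \<in> carrier G" "u \<in> carrier G"
    and "x \<otimes> z \<noteq> z \<otimes> x" "y \<otimes> t \<noteq> t \<otimes> y"
    and "x [^] (2::nat) = \<one>" "y [^] (2::nat) = \<one>" "(x \<otimes> y) [^] (2::nat) = \<one>"
  shows "(x \<otimes> y) \<otimes> u = u \<otimes> (x \<otimes> y)"
  using dih_involutive_product_of_noncentral_involutions_central[of n "h x" "h z" "h y" "h t" "h u"]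
    assms square_eq_one_iff commute_iff h_mult
  by simp

lemma involutions_commuting_with_non_involutions_eq:
  assumes "x \<in> carrier G" "y \<in> carrier G" "z \<in> carrier G" "t \<in> carrier G"
    and "x \<noteq> \<one>" "x [^] (2::nat) = \<one>" "y \<noteq> \<one>" "y [^] (2::nat) = \<one>"
    and "z [^] (2::nat) \<noteq> \<one>" "t [^] (2::nat) \<noteq> \<one>" "x \<otimes> z = z \<otimes> x" "y \<otimes> t = t \<otimes> y"
  shows "x = y"
  using dih_involutions_commuting_with_non_involutions_eq[of "h x" n "h z" "h y" "h t"]
    assms h_carrier eq_one_iff square_eq_one_iff commute_iff h_eq_iff
  by simp

end

theorem lemma4p3:
  fixes G (structure) and n :: enat
  assumes "group G"
    and "n \<ge> 3"
    and "G \<cong> dihedral_group n"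
  shows
    "(\<forall>x\<in>carrier G. \<forall>y\<in>carrier G.
        (x [^] (2::nat) \<noteq> \<one> \<and> y [^] (2::nat) \<noteq> \<one>) \<longrightarrow> x \<otimes> y = y \<otimes> x)
   \<and> (\<forall>x\<in>carrier G. \<forall>y\<in>carrier G. \<forall>z\<in>carrier G.
        (x \<noteq> \<one> \<and> x [^] (2::nat) = \<one> \<and> y [^] (2::nat) \<noteq> \<one> \<and> x \<otimes> z \<noteq> z \<otimes> x)
          \<longrightarrow> inv x \<otimes> y \<otimes> x = inv y)
   \<and> (\<forall>x\<in>carrier G. \<forall>y\<in>carrier G. \<forall>z\<in>carrier G. \<forall>t\<in>carrier G. \<forall>u\<in>carrier G.
        (x \<otimes> z \<noteq> z \<otimes> x \<and> y \<otimes> t \<noteq> t \<otimes> y \<and> x [^] (2::nat) = \<one> \<and>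
         y [^] (2::nat) = \<one> \<and> (x \<otimes> y) [^] (2::nat) = \<one>)
          \<longrightarrow> (x \<otimes> y) \<otimes> u = u \<otimes> (x \<otimes> y))
   \<and> (\<forall>x\<in>carrier G. \<forall>y\<in>carrier G. \<forall>z\<in>carrier G. \<forall>t\<in>carrier G.
        (x \<noteq> \<one> \<and> x [^] (2::nat) = \<one> \<and> y \<noteq> \<one> \<and> y [^] (2::nat) = \<one> \<and>
         z [^] (2::nat) \<noteq> \<one> \<and> t [^] (2::nat) \<noteq> \<one> \<and> x \<otimes> z = z \<otimes> x \<and> y \<otimes> t = t \<otimes> y)
          \<longrightarrow> x = y)"
proof -
  obtain h where "h \<in> iso G (dihedral_group n)"
    using assms(3) by (auto simp: is_iso_def)
  then interpret dihedral_copy G n h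
    using assms(1) by (simp add: dihedral_copy_def dihedral_copy_axioms_def)
  show ?thesis
    by (intro conjI ballI impI; elim conjE;
        rule non_involutions_commute noncentral_involution_inverts_non_involution
          involutive_product_of_noncentral_involutions_central
          involutions_commuting_with_non_involutions_eq;
        assumption)
qed

end
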